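(* Let $k\ge 1$, $b\ge 0$ and $s$ be integers with $1\le s<k$. Then for every integer $t$, $$\sigma_{k}^{(b)}(t;s+1)=\sigma_{k}^{(b)}(t;s)-\sigma_{k}^{(b)}(t-s;s).$$
   Context: For a positive integer $m$, $(q)_m=(1-q)\cdots(1-q^m)$, $(q)_0=1$. For integers $b\ge 0$, $k\ge1$ and $1\le s\le k$, let $R^{(b)}_{k,s}(q)=\sum_{t=0}^{k-1}\sigma^{(b)}_k(t;s)q^t$ be the remainder of $\frac{1}{k^b}(q)_{k-1}^{\,b}(q)_{s-1}$ upon division by $1-q^k$. The values $\sigma^{(b)}_k(t;s)$ are extended to all integers $t$ by $k$-periodicity in $t$. *)

theory Defs
  imports "HOL-Computational_Algebra.Polynomial"
begin

definition qpoch :: "nat \<Rightarrow> rat poly" where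
  "qpoch m = (\<Prod>i\<in>{1..m}. 1 - monom 1 i)"

definition Rpoly :: "nat \<Rightarrow> nat \<Rightarrow> nat \<Rightarrow> rat poly" where
  "Rpoly b k s = (smult (1 / of_nat k ^ b) (qpoch (k - 1) ^ b * qpoch (s - 1))) mod (1 - monom 1 k)"

definition sigma :: "nat \<Rightarrow> nat \<Rightarrow> int \<Rightarrow> nat \<Rightarrow> rat" where
  "sigma b k t s = coeff (Rpoly b k s) (nat (t mod int k))"

end

theory Submission
  imports Defs
begin

text \<open>Since (q)_s = (q)_{s-1} (1 - q^s), the remainder R_{k,s+1} is R_{k,s} minus the remainder
  of q^s R_{k,s}. Modulo 1 - q^k we have q^k = 1, so multiplying a polynomial of degree below k
  by q^s and reducing merely rotates its k coefficients by s places; for the k-periodic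
  coefficients sigma this is the shift t \<mapsto> t - s.\<close>

lemma degree_one_minus_monom:
  assumes "k \<ge> 1"
  shows "degree (1 - monom (1::'a::comm_ring_1) k) = k"
proof -
  have "1 - monom (1::'a) k = monom (-1) k + 1" by (simp add: monom_altdef)
  also have "degree \<dots> = k" using assms
    by (subst degree_add_eq_left) (auto simp: degree_monom_eq)
  finally show ?thesis .
qed

lemma degree_mod_one_minus_monom_less:
  fixes p :: "'a::field poly"
  assumes "k \<ge> 1"
  shows "degree (p mod (1 - monom 1 k)) < k"
proof (cases "p mod (1 - monom 1 k) = 0")
  case False
  have "1 - monom (1::'a) k \<noteq> 0"
    using degree_one_minus_monom[OF assms, where 'a='a] assms by auto
  with False show ?thesis
    using degree_mod_less' degree_one_minus_monom[OF assms] by metis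
qed (use assms in simp)

lemma coeff_monom_mult_mod_one_minus_monom:
  fixes r :: "'a::field poly"
  assumes r: "degree r < k" and s: "s \<le> k" and j: "j < k"
  shows "coeff ((monom 1 s * r) mod (1 - monom 1 k)) j = coeff r ((j + k - s) mod k)"
proof -
  define lo where "lo = poly_cutoff (k - s) r"
  define hi where "hi = poly_shift (k - s) r"
  have r_high: "coeff r i = 0" if "i \<ge> k" for i
    using r that by (intro coeff_eq_0) simp
  have "r = lo + monom 1 (k - s) * hi"
    unfolding lo_def hi_def
    by (auto simp: poly_eq_iff coeff_poly_cutoff coeff_poly_shift coeff_monom_mult)
  then have "monom 1 s * r = monom 1 s * lo + monom 1 k * hi"
    using s by (simp add: algebra_simps mult_monom)
  also have "\<dots> = (monom 1 s * lo + hi) - hi * (1 - monom 1 k)"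
    by (simp add: algebra_simps)
  finally have "(monom 1 s * r) mod (1 - monom 1 k) = (monom 1 s * lo + hi) mod (1 - monom 1 k)"
    by (simp add: mod_diff_eq[symmetric])
  also have "\<dots> = monom 1 s * lo + hi"
  proof (rule mod_poly_less)
    have "degree (monom 1 s * lo + hi) \<le> k - 1"
    proof (rule degree_le, intro allI impI)
      fix i assume "k - 1 < i"
      then show "coeff (monom 1 s * lo + hi) i = 0"
        using s r_high unfolding lo_def hi_def
        by (auto simp: coeff_poly_cutoff coeff_poly_shift coeff_monom_mult)
    qed
    then show "degree (monom 1 s * lo + hi) < degree (1 - monom (1::'a) k)"
      using r j by (simp add: degree_one_minus_monom)
  qed
  finally show ?thesis
    using s j r_high unfolding lo_def hi_def
    by (auto simp: coeff_poly_cutoff coeff_poly_shift coeff_monom_mult mod_if)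
qed

lemma nat_mod_diff_eq:
  fixes t :: int
  assumes "s \<le> k"
  shows "nat ((t - int s) mod int k) = (nat (t mod int k) + k - s) mod k"
proof (cases "k = 0")
  case False
  have "int ((nat (t mod int k) + k - s) mod k) = (t mod int k + int k - int s) mod int k"
    using assms False by (simp add: of_nat_mod of_nat_diff)
  also have "\<dots> = (t - int s + int k) mod int k"
    by (metis add_diff_eq add.commute mod_add_left_eq)
  also have "\<dots> = (t - int s) mod int k"
    by simp
  finally show ?thesis by simp
qed (use assms in simp)

lemma qpoch_Suc: "qpoch (Suc m) = qpoch m * (1 - monom 1 (Suc m))"
  unfolding qpoch_def by (simp add: mult.commute)

lemma Rpoly_Suc:
  assumes "s \<ge> 1"
  shows "Rpoly b k (s + 1) = Rpoly b k s - (monom 1 s * Rpoly b k s) mod (1 - monom 1 k)"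
proof -
  define c :: rat where "c = 1 / of_nat k ^ b"
  define P where "P = qpoch (k - 1) ^ b * qpoch (s - 1)"
  have qpoch_s: "qpoch s = qpoch (s - 1) * (1 - monom 1 s)"
    using assms qpoch_Suc[of "s - 1"] by simp
  have "qpoch (k - 1) ^ b * qpoch s = P - monom 1 s * P"
    unfolding P_def qpoch_s by (simp add: algebra_simps)
  then have "smult c (qpoch (k - 1) ^ b * qpoch s) = smult c P - monom 1 s * smult c P"
    by (simp add: smult_diff_right mult_smult_right)
  then have "Rpoly b k (s + 1) = (smult c P - monom 1 s * smult c P) mod (1 - monom 1 k)"
    unfolding Rpoly_def c_def by simp
  also have "\<dots> = Rpoly b k s - (monom 1 s * Rpoly b k s) mod (1 - monom 1 k)"
    unfolding Rpoly_def c_def P_def by (simp add: poly_mod_diff_left mod_mult_right_eq)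
  finally show ?thesis .
qed

theorem theorem2p2:
  fixes k b s :: nat and t :: int
  assumes "1 \<le> k" and "1 \<le> s" and "s < k"
  shows "sigma b k t (s + 1) = sigma b k t s - sigma b k (t - int s) s"
proof -
  have "nat (t mod int k) < k"
    using assms(1) by (simp add: nat_less_iff)
  moreover have "degree (Rpoly b k s) < k"
    unfolding Rpoly_def using assms(1) by (rule degree_mod_one_minus_monom_less)
  ultimately show ?thesis
    using assms(3) unfolding sigma_def Rpoly_Suc[OF assms(2)] coeff_diff
    by (simp add: nat_mod_diff_eq coeff_monom_mult_mod_one_minus_monom)
qed

end
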